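(* Let $n\ge 3$, $\nu=n-1$, and let $y=\{(y_{1i},y_{2i})\}_{i=1}^n$ be i.i.d. bivariate normal with mean $\mu=(\mu_1,\alpha+\beta\mu_1)$ and covariance $$\Sigma=\begin{pmatrix}\tau^2+\sigma_1^2&\beta\tau^2\\ \beta\tau^2&\beta^2\tau^2+\sigma_2^2\end{pmatrix},$$ with parameters $\mu_1,\alpha\in\mathbb R$, $\beta\neq0$, $\tau^2,\sigma_1^2,\sigma_2^2\ge0$. Let $\bar y$ be the sample mean vector and $S$ the sample covariance matrix (divisor $n-1$), assumed positive definite. Take the conditional prior of $(\mu_1,\alpha,\tau^2,\sigma_1^2,\sigma_2^2)$ given $\beta$ to be constant in $(\mu_1,\alpha)$ and equal to $|\beta|\,p(\Sigma\mid\beta)$ in $(\tau^2,\sigma_1^2,\sigma_2^2)$, where $$p(\Sigma\mid\beta)=K(\beta,\nu_0,\Psi_0(\beta))^{-1}|\Sigma|^{-(\nu_0+3)/2}\exp\!\big[-\tfrac12\operatorname{tr}(\Psi_0(\beta)\Sigma^{-1})\big]\ \text{ on } R_\beta,\qquad \Psi_0(\beta)=\nu_0\kappa_0^2\begin{pmatrix}1&\rho_0\beta\\ \rho_0\beta&\beta^2\end{pmatrix},$$ with $\nu_0>1$, $-1<\rho_0<1$, $\kappa_0>0$. Then the reduced sampling density $p(y\mid\beta)=\int p(y\mid\mu_1,\alpha,\beta,\tau^2,\sigma_1^2,\sigma_2^2)\,p(\mu_1,\alpha,\tau^2,\sigma_1^2,\sigma_2^2\mid\beta)\,d\mu_1\,d\alpha\,d\tau^2\,d\sigma_1^2\,d\sigma_2^2$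 is, as a function of $\beta$, equal to $C\cdot K(\beta,\nu_0+\nu,\Psi_0(\beta)+\nu S)/K(\beta,\nu_0,\Psi_0(\beta))$ with $C$ independent of $\beta$. Consequently, for any proper prior density $p(\beta)$, $$p(\beta\mid y)=\frac{p(\beta)\,K(\beta,\nu_0+\nu,\Psi_0(\beta)+\nu S)/K(\beta,\nu_0,\Psi_0(\beta))}{\int_{-\infty}^{\infty}p(\beta)\,K(\beta,\nu_0+\nu,\Psi_0(\beta)+\nu S)/K(\beta,\nu_0,\Psi_0(\beta))\,d\beta}.$$
   Context: For $\beta\ne0$, $R_\beta$ denotes the set of positive-definite symmetric $2\times2$ matrices $\Sigma$ with $\Sigma_{12}/\beta\ge0$, $\Sigma_{11}-\Sigma_{12}/\beta\ge0$, $\Sigma_{22}-\beta\Sigma_{12}\ge0$ (equivalently, those of the displayed form with $\tau^2,\sigma_1^2,\sigma_2^2\ge0$, up to a null set). For $\nu>1$ and a positive-definite symmetric $\Psi$, $K(\beta,\nu,\Psi)=\int_{R_\beta}|\Sigma|^{-(\nu+3)/2}\exp[-\tfrac12\operatorname{tr}(\Psi\Sigma^{-1})]\,d\Sigma_{11}\,d\Sigma_{12}\,d\Sigma_{22}$. The full sampling density is $(2\pi)^{-n}|\Sigma|^{-n/2}\exp\{-\tfrac12\operatorname{tr}[(n(\bar y-\mu)^{\top}(\bar y-\mu)+\nu S)\Sigma^{-1}]\}$, with $\bar y,\mu$ row vectors. *)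

theory Defs
  imports "HOL-Analysis.Analysis"
begin

text \<open>A symmetric 2x2 real matrix [[a,b],[b,c]] is represented by the triple (a,b,c),
  i.e. (Sigma11, Sigma12, Sigma22).\<close>

type_synonym sym2 = "real \<times> real \<times> real"

definition det2 :: "sym2 \<Rightarrow> real" where
  "det2 M = (case M of (a,b,c) \<Rightarrow> a * c - b ^ 2)"

definition pos_def2 :: "sym2 \<Rightarrow> bool" where
  "pos_def2 M = (case M of (a,b,c) \<Rightarrow> a > 0 \<and> a * c - b ^ 2 > 0)"

definition inv2 :: "sym2 \<Rightarrow> sym2" where
  "inv2 M = (case M of (a,b,c) \<Rightarrow> (c / det2 M, - b / det2 M, a / det2 M))"

text \<open>Trace of the product of two symmetric 2x2 matrices.\<close>
definition tr2 :: "sym2 \<Rightarrow> sym2 \<Rightarrow> real" where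
  "tr2 P Q = (case P of (p11,p12,p22) \<Rightarrow> case Q of (q11,q12,q22) \<Rightarrow>
       p11 * q11 + 2 * p12 * q12 + p22 * q22)"

definition add2 :: "sym2 \<Rightarrow> sym2 \<Rightarrow> sym2" where
  "add2 P Q = (case P of (p11,p12,p22) \<Rightarrow> case Q of (q11,q12,q22) \<Rightarrow>
       (p11 + q11, p12 + q12, p22 + q22))"

definition scale2 :: "real \<Rightarrow> sym2 \<Rightarrow> sym2" where
  "scale2 t P = (case P of (p11,p12,p22) \<Rightarrow> (t * p11, t * p12, t * p22))"

definition R_beta :: "real \<Rightarrow> sym2 set" where
  "R_beta \<beta> = {(s11,s12,s22). pos_def2 (s11,s12,s22) \<and> s12 / \<beta> \<ge> 0 \<and>
       s11 - s12 / \<beta> \<ge> 0 \<and> s22 - \<beta> * s12 \<ge> 0}"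

definition iw_kernel :: "real \<Rightarrow> sym2 \<Rightarrow> sym2 \<Rightarrow> real" where
  "iw_kernel \<nu> \<Psi> \<Sigma> = det2 \<Sigma> powr (- (\<nu> + 3) / 2) * exp (- tr2 \<Psi> (inv2 \<Sigma>) / 2)"

definition K :: "real \<Rightarrow> real \<Rightarrow> sym2 \<Rightarrow> real" where
  "K \<beta> \<nu> \<Psi> = (\<integral>\<Sigma>. indicator (R_beta \<beta>) \<Sigma> * iw_kernel \<nu> \<Psi> \<Sigma> \<partial>lborel)"

definition Psi0 :: "real \<Rightarrow> real \<Rightarrow> real \<Rightarrow> real \<Rightarrow> sym2" where
  "Psi0 \<nu>0 \<kappa>0 \<rho>0 \<beta> = scale2 (\<nu>0 * \<kappa>0 ^ 2) (1, \<rho>0 * \<beta>, \<beta> ^ 2)"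

definition Sigma_of :: "real \<Rightarrow> real \<Rightarrow> real \<Rightarrow> real \<Rightarrow> sym2" where
  "Sigma_of \<beta> t2 s1 s2 = (t2 + s1, \<beta> * t2, \<beta> ^ 2 * t2 + s2)"

definition binorm_pdf :: "real \<times> real \<Rightarrow> sym2 \<Rightarrow> real \<times> real \<Rightarrow> real" where
  "binorm_pdf m \<Sigma> x =
     (let d1 = fst x - fst m; d2 = snd x - snd m; Q = inv2 \<Sigma> in
      (2 * pi) powr (-1) * det2 \<Sigma> powr (- 1 / 2) *
      exp (- (fst Q * d1 ^ 2 + 2 * fst (snd Q) * d1 * d2 + snd (snd Q) * d2 ^ 2) / 2))"

definition sampling_density ::
  "nat \<Rightarrow> (nat \<Rightarrow> real) \<Rightarrow> (nat \<Rightarrow> real) \<Rightarrow> real \<Rightarrow> real \<Rightarrow> real \<Rightarrow> real \<Rightarrow> real \<Rightarrow> real \<Rightarrow> real" where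
  "sampling_density n y1 y2 \<mu>1 \<alpha> \<beta> t2 s1 s2 =
     (\<Prod>i<n. binorm_pdf (\<mu>1, \<alpha> + \<beta> * \<mu>1) (Sigma_of \<beta> t2 s1 s2) (y1 i, y2 i))"

definition prior_Sigma :: "real \<Rightarrow> real \<Rightarrow> real \<Rightarrow> real \<Rightarrow> sym2 \<Rightarrow> real" where
  "prior_Sigma \<nu>0 \<kappa>0 \<rho>0 \<beta> \<Sigma> =
     indicator (R_beta \<beta>) \<Sigma> * iw_kernel \<nu>0 (Psi0 \<nu>0 \<kappa>0 \<rho>0 \<beta>) \<Sigma> /
       K \<beta> \<nu>0 (Psi0 \<nu>0 \<kappa>0 \<rho>0 \<beta>)"

definition cond_prior :: "real \<Rightarrow> real \<Rightarrow> real \<Rightarrow> real \<Rightarrow> real \<Rightarrow> real \<Rightarrow> real \<Rightarrow> real \<Rightarrow> real" where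
  "cond_prior c \<nu>0 \<kappa>0 \<rho>0 \<beta> t2 s1 s2 =
     (if t2 \<ge> 0 \<and> s1 \<ge> 0 \<and> s2 \<ge> 0
      then c * \<bar>\<beta>\<bar> * prior_Sigma \<nu>0 \<kappa>0 \<rho>0 \<beta> (Sigma_of \<beta> t2 s1 s2) else 0)"

definition reduced_density ::
  "nat \<Rightarrow> (nat \<Rightarrow> real) \<Rightarrow> (nat \<Rightarrow> real) \<Rightarrow> real \<Rightarrow> real \<Rightarrow> real \<Rightarrow> real \<Rightarrow> real \<Rightarrow> real" where
  "reduced_density n y1 y2 c \<nu>0 \<kappa>0 \<rho>0 \<beta> =
     (\<integral>p. (case p of (\<mu>1, \<alpha>, t2, s1, s2) \<Rightarrow>
              sampling_density n y1 y2 \<mu>1 \<alpha> \<beta> t2 s1 s2 * cond_prior c \<nu>0 \<kappa>0 \<rho>0 \<beta> t2 s1 s2)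
        \<partial>(lborel :: (real \<times> real \<times> real \<times> real \<times> real) measure))"

definition sample_mean :: "nat \<Rightarrow> (nat \<Rightarrow> real) \<Rightarrow> real" where
  "sample_mean n x = (\<Sum>i<n. x i) / real n"

definition sample_cov :: "nat \<Rightarrow> (nat \<Rightarrow> real) \<Rightarrow> (nat \<Rightarrow> real) \<Rightarrow> sym2" where
  "sample_cov n y1 y2 =
     (let m1 = sample_mean n y1; m2 = sample_mean n y2 in
      ((\<Sum>i<n. (y1 i - m1) ^ 2) / (real n - 1),
       (\<Sum>i<n. (y1 i - m1) * (y2 i - m2)) / (real n - 1),
       (\<Sum>i<n. (y2 i - m2) ^ 2) / (real n - 1)))"

definition posterior :: "(real \<Rightarrow> real) \<Rightarrow> (real \<Rightarrow> real) \<Rightarrow> real \<Rightarrow> real" where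
  "posterior pb lik \<beta> = pb \<beta> * lik \<beta> / (\<integral>b. pb b * lik b \<partial>lborel)"

definition proper_density :: "(real \<Rightarrow> real) \<Rightarrow> bool" where
  "proper_density pb \<longleftrightarrow> (\<forall>b. pb b \<ge> 0) \<and> integrable lborel pb \<and> (\<integral>b. pb b \<partial>lborel) = 1"

end

theory Submission
  imports Defs "HOL-Probability.Distributions"
begin

(* The reduced sampling density is computed by integrating the parameters out in two stages.

   (1) Means.  Writing \<alpha> + \<beta> \<mu>1 as a new variable, the likelihood is a product of
       bivariate normal densities with free mean (\<mu>1, \<mu>2).  Completing the square
       (sum_qf2_deviations) splits the exponent into tr(T \<Sigma>\<inverse>), T the scatter matrix,
       plus a quadratic form in the mean, whose Gaussian integral (nn_integral_gaussian_2d)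
       leaves (2\<pi>)^(1-n)/n |\<Sigma>|^(-(n-1)/2) exp(-tr(T \<Sigma>\<inverse>)/2)  (mean_integral).
   (2) Covariance.  Multiplied by the inverse-Wishart prior kernel this is again an
       inverse-Wishart kernel with parameters \<nu>0 + \<nu>, \<Psi>0 + T (iw_kernel_conjugate).  The
       linear map (\<tau>\<^sup>2, \<sigma>1\<^sup>2, \<sigma>2\<^sup>2) \<mapsto> \<Sigma> has Jacobian |\<beta>| (nn_integral_Sigma_of),
       which cancels the factor |\<beta>| of the prior, so the remaining integral is K(\<beta>, \<nu>0+\<nu>, \<Psi>0+T).

   All integrals are computed as nonnegative (extended real) integrals with Tonelli's theorem,
   so no integrability side conditions arise; reduced_density_eq collects the result, and the
   posterior formula follows because Bayes' rule is invariant under rescaling the likelihood. *)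

section \<open>Integration tools on products of real lines\<close>

text \<open>The projections are Borel measurable on a product of Euclidean spaces; declared for the
  measurability prover, which otherwise only knows them for the product sigma-algebra.\<close>

lemma borel_measurable_fst_euclidean[measurable]:
  "fst \<in> borel_measurable (borel :: ('a::euclidean_space \<times> 'b::euclidean_space) measure)"
  by (subst borel_prod[symmetric]) (rule measurable_fst)

lemma borel_measurable_snd_euclidean[measurable]:
  "snd \<in> borel_measurable (borel :: ('a::euclidean_space \<times> 'b::euclidean_space) measure)"
  by (subst borel_prod[symmetric]) (rule measurable_snd)

text \<open>Borel measurability on a product of Euclidean spaces transfers to the product of the
  Borel and Lebesgue-Borel measures, which is what Tonelli's theorem is stated for.\<close>

lemma borel_measurable_pair_lborel:
  fixes f :: "'a::euclidean_space \<times> 'b::euclidean_space \<Rightarrow> ennreal"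
  assumes "f \<in> borel_measurable borel"
  shows "f \<in> borel_measurable (borel \<Otimes>\<^sub>M lborel)"
proof -
  have "sets (borel \<Otimes>\<^sub>M lborel) = sets (borel \<Otimes>\<^sub>M (borel :: 'b measure))"
    by (rule sets_pair_measure_cong) simp_all
  also have "\<dots> = sets (borel :: ('a \<times> 'b) measure)" unfolding borel_prod ..
  finally show ?thesis
    by (subst measurable_cong_sets[OF _ refl]) (use assms in simp_all)
qed

lemma borel_measurable_partial_nn_integral:
  fixes F :: "'a::euclidean_space \<times> 'b::euclidean_space \<Rightarrow> ennreal"
  assumes "F \<in> borel_measurable borel"
  shows "(\<lambda>x. \<integral>\<^sup>+y. F (x, y) \<partial>lborel) \<in> borel_measurable borel"
  using lborel.borel_measurable_nn_integral_fst[OF borel_measurable_pair_lborel[OF assms]] by simp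

lemma nn_integral_lborel_pair:
  fixes f :: "'a::euclidean_space \<times> 'b::euclidean_space \<Rightarrow> ennreal"
  assumes [measurable]: "f \<in> borel_measurable borel"
  shows "(\<integral>\<^sup>+p. f p \<partial>lborel) = (\<integral>\<^sup>+x. \<integral>\<^sup>+y. f (x,y) \<partial>lborel \<partial>lborel)"
proof -
  have "(\<integral>\<^sup>+p. f p \<partial>lborel) = (\<integral>\<^sup>+p. f p \<partial>(lborel \<Otimes>\<^sub>M lborel))"
    by (simp only: lborel_prod)
  also have "\<dots> = (\<integral>\<^sup>+x. \<integral>\<^sup>+y. f (x,y) \<partial>lborel \<partial>lborel)"
    by (rule lborel.nn_integral_fst[symmetric]) (simp only: lborel_prod, simp)
  finally show ?thesis .
qed

lemma nn_integral_lborel_swap: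
  fixes f :: "'a::euclidean_space \<Rightarrow> 'b::euclidean_space \<Rightarrow> ennreal"
  assumes "case_prod f \<in> borel_measurable borel"
  shows "(\<integral>\<^sup>+x. \<integral>\<^sup>+y. f x y \<partial>lborel \<partial>lborel) = (\<integral>\<^sup>+y. \<integral>\<^sup>+x. f x y \<partial>lborel \<partial>lborel)"
  using assms by (intro lborel_pair.Fubini'[symmetric]) (subst lborel_prod, simp)

text \<open>This is the
  order in which the reduced density is computed: first the means, then the variances.\<close>

lemma nn_integral_lborel_means_first:
  fixes F :: "real \<times> real \<times> 'c::euclidean_space \<Rightarrow> ennreal"
  assumes [measurable]: "F \<in> borel_measurable borel"
  shows "(\<integral>\<^sup>+p. F p \<partial>lborel) = (\<integral>\<^sup>+r. \<integral>\<^sup>+x. \<integral>\<^sup>+y. F (x, y, r) \<partial>lborel \<partial>lborel \<partial>lborel)"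
proof -
  have inner_m: "(\<lambda>(x, r). \<integral>\<^sup>+y. F (x, y, r) \<partial>lborel) \<in> borel_measurable borel"
    using borel_measurable_partial_nn_integral[of "\<lambda>(w, y). F (fst w, y, snd w)"]
    by (simp add: case_prod_beta')
  have "(\<integral>\<^sup>+p. F p \<partial>lborel) = (\<integral>\<^sup>+x. \<integral>\<^sup>+y. \<integral>\<^sup>+r. F (x, y, r) \<partial>lborel \<partial>lborel \<partial>lborel)"
    by (simp add: nn_integral_lborel_pair)
  also have "\<dots> = (\<integral>\<^sup>+x. \<integral>\<^sup>+r. \<integral>\<^sup>+y. F (x, y, r) \<partial>lborel \<partial>lborel \<partial>lborel)"
    by (intro nn_integral_cong nn_integral_lborel_swap) simp
  also have "\<dots> = (\<integral>\<^sup>+r. \<integral>\<^sup>+x. \<integral>\<^sup>+y. F (x, y, r) \<partial>lborel \<partial>lborel \<partial>lborel)"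
    by (rule nn_integral_lborel_swap) (use inner_m in simp)
  finally show ?thesis .
qed

lemma nn_integral_lborel_translate:
  fixes f :: "real \<Rightarrow> ennreal"
  assumes "f \<in> borel_measurable borel"
  shows "(\<integral>\<^sup>+x. f (t + x) \<partial>lborel) = (\<integral>\<^sup>+x. f x \<partial>lborel)"
  using nn_integral_real_affine[of f 1 t] assms by simp

lemma nn_integral_lborel_dilate:
  fixes f :: "real \<Rightarrow> ennreal"
  assumes "f \<in> borel_measurable borel" and c: "c \<noteq> 0"
  shows "(\<integral>\<^sup>+x. f (c * x) \<partial>lborel) = ennreal (1 / \<bar>c\<bar>) * (\<integral>\<^sup>+x. f x \<partial>lborel)"
proof -
  have "(\<integral>\<^sup>+x. f x \<partial>lborel) = ennreal \<bar>c\<bar> * (\<integral>\<^sup>+x. f (c * x) \<partial>lborel)"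
    using nn_integral_real_affine[of f c 0] assms by simp
  moreover have "ennreal (1 / \<bar>c\<bar>) * ennreal \<bar>c\<bar> = 1"
    using c by (simp add: ennreal_mult[symmetric])
  ultimately show ?thesis by (simp add: mult.assoc[symmetric])
qed

text \<open>Change of variables from the parameters \<open>(\<tau>\<^sup>2, \<sigma>\<^sub>1\<^sup>2, \<sigma>\<^sub>2\<^sup>2)\<close> to the covariance matrix
  \<open>\<Sigma>\<close>: a linear map of determinant \<open>\<beta>\<close>, realised as two shears and one dilation.\<close>

lemma nn_integral_Sigma_of:
  fixes F :: "sym2 \<Rightarrow> ennreal" and \<beta> :: real
  assumes [measurable]: "F \<in> borel_measurable borel" and \<beta>: "\<beta> \<noteq> 0"
  shows "(\<integral>\<^sup>+r. F (Sigma_of \<beta> (fst r) (fst (snd r)) (snd (snd r))) \<partial>lborel)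
       = ennreal (1 / \<bar>\<beta>\<bar>) * (\<integral>\<^sup>+S. F S \<partial>lborel)"
proof -
  define H where "H = (\<lambda>x u. \<integral>\<^sup>+z. F (x, u, z) \<partial>lborel)"
  have H_m[measurable]: "case_prod H \<in> borel_measurable borel"
    using borel_measurable_partial_nn_integral[of "\<lambda>(w, z). F (fst w, snd w, z)"]
    unfolding H_def case_prod_beta by simp
  have H_fst: "(\<lambda>x. H x u) \<in> borel_measurable borel" for u
    using measurable_comp[OF borel_measurable_Pair[OF measurable_ident_sets[OF refl] borel_measurable_const] H_m]
    by (simp add: comp_def)
  have H_snd: "(\<lambda>u. H x u) \<in> borel_measurable borel" for x
    using measurable_comp[OF borel_measurable_Pair[OF borel_measurable_const measurable_ident_sets[OF refl]] H_m]
    by (simp add: comp_def)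
  have H_dilated: "(\<lambda>(t, x). H x (\<beta> * t)) \<in> borel_measurable borel"
    using measurable_comp[OF borel_measurable_Pair[OF borel_measurable_snd_euclidean
        borel_measurable_times[OF borel_measurable_const borel_measurable_fst_euclidean]] H_m]
    by (simp add: comp_def case_prod_beta')
  have "(\<integral>\<^sup>+r. F (Sigma_of \<beta> (fst r) (fst (snd r)) (snd (snd r))) \<partial>lborel)
      = (\<integral>\<^sup>+t. \<integral>\<^sup>+s1. \<integral>\<^sup>+s2. F (t + s1, \<beta> * t, \<beta>^2 * t + s2) \<partial>lborel \<partial>lborel \<partial>lborel)"
    unfolding Sigma_of_def
    by (subst nn_integral_lborel_pair, simp, intro nn_integral_cong, subst nn_integral_lborel_pair) simp_all
  also have "\<dots> = (\<integral>\<^sup>+t. \<integral>\<^sup>+s1. H (t + s1) (\<beta> * t) \<partial>lborel \<partial>lborel)"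
    unfolding H_def by (intro nn_integral_cong nn_integral_lborel_translate) simp
  also have "\<dots> = (\<integral>\<^sup>+t. \<integral>\<^sup>+x. H x (\<beta> * t) \<partial>lborel \<partial>lborel)"
    by (intro nn_integral_cong nn_integral_lborel_translate[where f="\<lambda>x. H x _"] H_fst)
  also have "\<dots> = (\<integral>\<^sup>+x. \<integral>\<^sup>+t. H x (\<beta> * t) \<partial>lborel \<partial>lborel)"
    by (rule nn_integral_lborel_swap) (use H_dilated in simp)
  also have "\<dots> = (\<integral>\<^sup>+x. ennreal (1 / \<bar>\<beta>\<bar>) * (\<integral>\<^sup>+u. H x u \<partial>lborel) \<partial>lborel)"
    by (intro nn_integral_cong nn_integral_lborel_dilate H_snd \<beta>)
  also have "\<dots> = ennreal (1 / \<bar>\<beta>\<bar>) * (\<integral>\<^sup>+x. \<integral>\<^sup>+u. H x u \<partial>lborel \<partial>lborel)"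
    by (rule nn_integral_cmult) (simp add: H_def)
  also have "(\<integral>\<^sup>+x. \<integral>\<^sup>+u. H x u \<partial>lborel \<partial>lborel) = (\<integral>\<^sup>+S. F S \<partial>lborel)"
  proof -
    have "(\<integral>\<^sup>+S. F S \<partial>lborel) = (\<integral>\<^sup>+x. \<integral>\<^sup>+w. F (x, w) \<partial>lborel \<partial>lborel)"
      by (rule nn_integral_lborel_pair) simp
    also have "\<dots> = (\<integral>\<^sup>+x. \<integral>\<^sup>+u. H x u \<partial>lborel \<partial>lborel)"
      unfolding H_def by (intro nn_integral_cong nn_integral_lborel_pair) simp
    finally show ?thesis by simp
  qed
  finally show ?thesis .
qed

text \<open>If two functions agree off the origin, their Lebesgue integrals agree (also in the
  non-integrable case, where both are 0 by convention).\<close>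

lemma integral_lborel_cong_off_zero:
  fixes f g :: "real \<Rightarrow> real"
  assumes "\<And>x. x \<noteq> 0 \<Longrightarrow> f x = g x"
  shows "integral\<^sup>L lborel f = integral\<^sup>L lborel g"
proof -
  have transfer: "h2 \<in> borel_measurable lborel"
    if "h1 \<in> borel_measurable lborel" "\<And>x. x \<noteq> 0 \<Longrightarrow> h1 x = h2 x" for h1 h2 :: "real \<Rightarrow> real"
  proof -
    have "h2 = (\<lambda>x. if x = 0 then h2 0 else h1 x)" using that(2) by (auto simp: fun_eq_iff)
    also have "\<dots> \<in> borel_measurable lborel" using that(1) by measurable
    finally show ?thesis .
  qed
  show ?thesis
  proof (cases "f \<in> borel_measurable lborel")
    case True
    then have "g \<in> borel_measurable lborel" using transfer assms by blast
    with True show ?thesis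
      by (intro integral_cong_AE) (auto intro: AE_mp[OF AE_lborel_singleton[of 0]] simp: assms)
  next
    case False
    then have "g \<notin> borel_measurable lborel" using transfer[of g f] assms by metis
    with False have "\<not> integrable lborel f" "\<not> integrable lborel g"
      using borel_measurable_integrable by blast+
    then show ?thesis by (simp add: not_integrable_integral_eq)
  qed
qed

section \<open>Symmetric 2x2 matrices\<close>

text \<open>Component-wise forms of the matrix operations of the definitions, free of case
  distinctions on the triple; they serve the measurability prover and arithmetic proofs.\<close>

lemma det2_alt: "det2 M = fst M * snd (snd M) - (fst (snd M))^2"
  by (cases M) (simp add: det2_def)

lemma inv2_alt: "inv2 M = (snd (snd M) / det2 M, - fst (snd M) / det2 M, fst M / det2 M)"
  by (cases M) (simp add: inv2_def det2_def)

lemma tr2_alt: "tr2 P Q = fst P * fst Q + 2 * fst (snd P) * fst (snd Q) + snd (snd P) * snd (snd Q)"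
  by (cases P, cases Q) (simp add: tr2_def)

lemma pos_def2_alt: "pos_def2 M \<longleftrightarrow> fst M > 0 \<and> det2 M > 0"
  by (cases M) (simp add: pos_def2_def det2_def)

lemma pos_def2_last_pos:
  assumes "pos_def2 (a, b, c)"
  shows "c > 0"
proof (rule ccontr)
  assume "\<not> c > 0"
  moreover have "a > 0" "a * c - b^2 > 0" using assms by (simp_all add: pos_def2_def)
  ultimately show False by (smt (verit) mult_nonneg_nonpos zero_le_power2)
qed

lemma det2_inv2:
  assumes "det2 S \<noteq> 0"
  shows "det2 (inv2 S) = 1 / det2 S"
proof -
  obtain a b c where S: "S = (a, b, c)" by (cases S)
  define d where "d = det2 S"
  have d: "d \<noteq> 0" using assms by (simp add: d_def)
  have "inv2 S = (c / d, - b / d, a / d)" by (simp add: S inv2_def d_def)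
  then have "det2 (inv2 S) = (a * c - b^2) / d^2"
    using d by (simp add: det2_def field_simps power2_eq_square)
  also have "\<dots> = 1 / d"
    using d by (simp add: S d_def det2_def power2_eq_square)
  finally show ?thesis by (simp add: d_def)
qed

lemma pos_def2_inv2:
  assumes "pos_def2 S"
  shows "pos_def2 (inv2 S)"
proof -
  obtain a b c where S: "S = (a, b, c)" by (cases S)
  have "c > 0" using assms pos_def2_last_pos by (simp add: S)
  moreover have "det2 S > 0" using assms by (simp add: pos_def2_alt)
  ultimately show ?thesis
    using det2_inv2[of S] by (simp add: pos_def2_alt S inv2_def)
qed

lemma tr2_add2: "tr2 (add2 P Q) R = tr2 P R + tr2 Q R"
  by (simp add: tr2_alt add2_def case_prod_beta algebra_simps)

lemma borel_measurable_det2[measurable]: "det2 \<in> borel_measurable borel"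
  unfolding det2_alt[abs_def] by measurable

definition qf2 :: "sym2 \<Rightarrow> real \<Rightarrow> real \<Rightarrow> real" where
  "qf2 Q d1 d2 = fst Q * d1^2 + 2 * fst (snd Q) * d1 * d2 + snd (snd Q) * d2^2"

section \<open>Gaussian integrals\<close>

text \<open>The one-dimensional Gaussian integral, read off from the normal density.\<close>

lemma nn_integral_gaussian_1d:
  fixes k m :: real
  assumes k: "k > 0"
  shows "(\<integral>\<^sup>+y. ennreal (exp (- k * (y - m)^2)) \<partial>lborel) = ennreal (sqrt (pi / k))"
proof -
  define s where "s = 1 / sqrt (2 * k)"
  have s: "s > 0" using k by (simp add: s_def)
  have s2: "2 * s^2 = 1 / k" using k by (simp add: s_def power_divide)
  have density: "exp (- k * (y - m)^2) = sqrt (pi / k) * normal_density m s y" for y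
  proof -
    have e1: "2 * pi * s^2 = pi / k"
      using s2 by (metis mult.commute mult.left_commute times_divide_eq_right mult_1_right)
    have e2: "(y - m)^2 / (2 * s^2) = k * (y - m)^2" unfolding s2 by simp
    have "normal_density m s y = 1 / sqrt (pi / k) * exp (- k * (y - m)^2)"
      unfolding normal_density_def minus_divide_left[symmetric] e1 e2 by simp
    then show ?thesis using k by simp
  qed
  have "(\<integral>\<^sup>+y. ennreal (exp (- k * (y - m)^2)) \<partial>lborel)
      = (\<integral>\<^sup>+y. ennreal (sqrt (pi / k)) * ennreal (normal_density m s y) \<partial>lborel)"
    by (intro nn_integral_cong, simp only: density, rule ennreal_mult) (use k in auto)
  also have "\<dots> = ennreal (sqrt (pi / k)) * (\<integral>\<^sup>+y. ennreal (normal_density m s y) \<partial>lborel)"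
    by (rule nn_integral_cmult) simp
  also have "(\<integral>\<^sup>+y. ennreal (normal_density m s y) \<partial>lborel) = 1"
    using s by (subst nn_integral_eq_integral) (simp_all add: integrable_normal_density integral_normal_density)
  finally show ?thesis by simp
qed

text \<open>The two-dimensional Gaussian integral \<open>\<integral>\<integral> exp(-k Q(x-u, y-v)) = \<pi> / (k \<surd>det Q)\<close> for
  a positive definite form \<open>Q\<close>, by completing the square in the inner variable.\<close>

lemma nn_integral_gaussian_2d:
  fixes k u v :: real and Q :: sym2
  assumes k: "k > 0" and Q: "pos_def2 Q"
  shows "(\<integral>\<^sup>+x. \<integral>\<^sup>+y. ennreal (exp (- k * qf2 Q (x - u) (y - v))) \<partial>lborel \<partial>lborel)
        = ennreal (pi / (k * sqrt (det2 Q)))"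
proof -
  obtain p q r where Q_eq: "Q = (p, q, r)" by (cases Q)
  have r: "r > 0" using Q pos_def2_last_pos by (simp add: Q_eq)
  have d: "p * r - q^2 > 0" using Q by (simp add: Q_eq pos_def2_def)
  define a where "a = p - q^2 / r"
  have a: "a > 0" using d r by (simp add: a_def field_simps)
  have inner: "(\<integral>\<^sup>+y. ennreal (exp (- k * qf2 Q (x - u) (y - v))) \<partial>lborel)
      = ennreal (sqrt (pi / (k * r))) * ennreal (exp (- (k * a) * (x - u)^2))" for x
  proof -
    define w where "w = v - q * (x - u) / r"
    have square: "exp (- k * qf2 Q (x - u) (y - v))
        = exp (- (k * a) * (x - u)^2) * exp (- (k * r) * (y - w)^2)" for y
    proof -
      have "qf2 Q (x - u) (y - v) = a * (x - u)^2 + r * (y - w)^2"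
        using r unfolding Q_eq qf2_def a_def w_def by (simp add: field_simps power2_eq_square)
      then show ?thesis by (simp add: exp_add[symmetric] algebra_simps)
    qed
    have "(\<integral>\<^sup>+y. ennreal (exp (- k * qf2 Q (x - u) (y - v))) \<partial>lborel)
      = (\<integral>\<^sup>+y. ennreal (exp (- (k * a) * (x - u)^2)) * ennreal (exp (- (k * r) * (y - w)^2)) \<partial>lborel)"
      by (intro nn_integral_cong) (subst square, simp add: ennreal_mult)
    also have "\<dots> = ennreal (exp (- (k * a) * (x - u)^2)) * (\<integral>\<^sup>+y. ennreal (exp (- (k * r) * (y - w)^2)) \<partial>lborel)"
      by (rule nn_integral_cmult) simp
    also have "\<dots> = ennreal (exp (- (k * a) * (x - u)^2)) * ennreal (sqrt (pi / (k * r)))"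
      using k r by (subst nn_integral_gaussian_1d) auto
    finally show ?thesis by (simp add: mult.commute)
  qed
  have "(\<integral>\<^sup>+x. \<integral>\<^sup>+y. ennreal (exp (- k * qf2 Q (x - u) (y - v))) \<partial>lborel \<partial>lborel)
      = ennreal (sqrt (pi / (k * r))) * (\<integral>\<^sup>+x. ennreal (exp (- (k * a) * (x - u)^2)) \<partial>lborel)"
    unfolding inner by (rule nn_integral_cmult) simp
  also have "\<dots> = ennreal (sqrt (pi / (k * r)) * sqrt (pi / (k * a)))"
    using k a r by (subst nn_integral_gaussian_1d) (auto simp: ennreal_mult)
  also have "sqrt (pi / (k * r)) * sqrt (pi / (k * a)) = pi / (k * sqrt (det2 Q))"
  proof -
    have "sqrt (pi / (k * r)) * sqrt (pi / (k * a)) = sqrt ((pi / k)^2 / (r * a))"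
      using k r a by (simp add: real_sqrt_mult[symmetric] field_simps power2_eq_square)
    also have "r * a = det2 Q" using r by (simp add: Q_eq det2_def a_def field_simps)
    finally show ?thesis
      using k by (simp add: real_sqrt_divide)
  qed
  finally show ?thesis .
qed

definition scatter :: "nat \<Rightarrow> (nat \<Rightarrow> real) \<Rightarrow> (nat \<Rightarrow> real) \<Rightarrow> sym2" where
  "scatter n y1 y2 =
     ((\<Sum>i<n. (y1 i - sample_mean n y1)^2),
      (\<Sum>i<n. (y1 i - sample_mean n y1) * (y2 i - sample_mean n y2)),
      (\<Sum>i<n. (y2 i - sample_mean n y2)^2))"

lemma scale2_sample_cov:
  assumes "n > 1"
  shows "scale2 (real n - 1) (sample_cov n y1 y2) = scatter n y1 y2"
  using assms by (simp add: scale2_def sample_cov_def scatter_def Let_def)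

lemma sum_deviations_zero:
  fixes x :: "nat \<Rightarrow> real"
  assumes "n > 0"
  shows "(\<Sum>i<n. x i - sample_mean n x) = 0"
  using assms by (simp add: sum_subtractf sample_mean_def)

text \<open>Completing the square: the sum of a quadratic form over the deviations from a point
  \<open>m\<close> splits into the scatter part and \<open>n\<close> times the form at \<open>m - y\<^sub>m\<^sub>e\<^sub>a\<^sub>n\<close>, since the
  deviations from the sample mean sum to zero.\<close>

lemma sum_qf2_deviations:
  fixes x1 x2 :: "nat \<Rightarrow> real" and m1 m2 :: real and Q :: sym2
  assumes n: "n > 0"
  shows "(\<Sum>i<n. qf2 Q (x1 i - m1) (x2 i - m2))
       = tr2 (scatter n x1 x2) Q + real n * qf2 Q (m1 - sample_mean n x1) (m2 - sample_mean n x2)"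
proof -
  obtain p q r where Q: "Q = (p, q, r)" by (cases Q)
  define e1 where "e1 = m1 - sample_mean n x1"
  define e2 where "e2 = m2 - sample_mean n x2"
  define a where "a = (\<lambda>i. x1 i - sample_mean n x1)"
  define b where "b = (\<lambda>i. x2 i - sample_mean n x2)"
  have expand: "qf2 Q (x1 i - m1) (x2 i - m2)
      = p * (a i)^2 + 2 * q * (a i * b i) + r * (b i)^2 - (2 * p * e1 + 2 * q * e2) * a i
        - (2 * q * e1 + 2 * r * e2) * b i + (p * e1^2 + 2 * q * e1 * e2 + r * e2^2)" for i
  proof -
    have dev1: "x1 i - m1 = a i - e1" and dev2: "x2 i - m2 = b i - e2"
      by (simp_all add: a_def b_def e1_def e2_def)
    show ?thesis unfolding Q qf2_def dev1 dev2 by (simp add: power2_eq_square algebra_simps)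
  qed
  have "(\<Sum>i<n. a i) = 0" "(\<Sum>i<n. b i) = 0"
    using sum_deviations_zero[OF n] by (simp_all add: a_def b_def)
  then have "(\<Sum>i<n. qf2 Q (x1 i - m1) (x2 i - m2))
      = p * (\<Sum>i<n. (a i)^2) + 2 * q * (\<Sum>i<n. a i * b i) + r * (\<Sum>i<n. (b i)^2) + real n * qf2 Q e1 e2"
    unfolding expand
    by (simp add: sum.distrib sum_subtractf sum_distrib_left[symmetric] Q qf2_def)
  then show ?thesis
    by (simp add: scatter_def tr2_def Q a_def b_def e1_def e2_def algebra_simps)
qed

section \<open>Integrating out the mean\<close>

lemma binorm_pdf_qf2:
  "binorm_pdf (m1, m2) S (x1, x2)
     = (2 * pi) powr (-1) * det2 S powr (- 1 / 2) * exp (- qf2 (inv2 S) (x1 - m1) (x2 - m2) / 2)"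
  by (simp add: binorm_pdf_def Let_def qf2_def)

lemma sample_likelihood_factor:
  assumes n: "n > 0"
  shows "(\<Prod>i<n. binorm_pdf (m1, m2) S (y1 i, y2 i))
       = ((2 * pi) powr (-1) * det2 S powr (- 1 / 2)) ^ n * exp (- tr2 (scatter n y1 y2) (inv2 S) / 2)
         * exp (- (real n / 2) * qf2 (inv2 S) (m1 - sample_mean n y1) (m2 - sample_mean n y2))"
proof -
  define A where "A = (2 * pi) powr (-1) * det2 S powr (- 1 / 2)"
  define E where "E = (\<lambda>i. qf2 (inv2 S) (y1 i - m1) (y2 i - m2))"
  have "(\<Prod>i<n. binorm_pdf (m1, m2) S (y1 i, y2 i)) = (\<Prod>i<n. A * exp (- E i / 2))"
    by (simp add: binorm_pdf_qf2 A_def E_def)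
  also have "\<dots> = A ^ n * exp (- (\<Sum>i<n. E i) / 2)"
    by (simp add: prod.distrib exp_sum[symmetric] sum_divide_distrib sum_negf)
  finally show ?thesis
    unfolding E_def sum_qf2_deviations[OF n] A_def
    by (simp add: exp_add[symmetric] field_simps)
qed

text \<open>Normalising constant left after the Gaussian integral over the mean.\<close>

lemma mean_integral_constant:
  fixes d :: real
  assumes d: "d > 0" and n: "n > 0"
  shows "((2 * pi) powr (-1) * d powr (- 1 / 2)) ^ n * (pi / (real n / 2 * sqrt (1 / d)))
       = (2 * pi) powr (1 - real n) / real n * d powr (- (real n - 1) / 2)"
proof -
  have power: "((2 * pi) powr (-1) * d powr (- 1 / 2)) ^ n = (2 * pi) powr (- real n) * d powr (- real n / 2)"
  proof -
    have "((2 * pi) powr (-1)) ^ n = (2 * pi) powr (- real n)" by (subst powr_power) simp_all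
    moreover have "(d powr (- 1 / 2)) ^ n = d powr (- real n / 2)" using d by (subst powr_power) simp_all
    ultimately show ?thesis by (simp only: power_mult_distrib)
  qed
  have root: "sqrt (1 / d) = d powr (- 1 / 2)"
    using d by (simp add: powr_minus_divide powr_half_sqrt real_sqrt_divide)
  have "((2 * pi) powr (-1) * d powr (- 1 / 2)) ^ n * (pi / (real n / 2 * sqrt (1 / d)))
      = ((2 * pi) powr (- real n) * (2 * pi) powr 1) * (d powr (- real n / 2) * d powr (1 / 2)) / real n"
    using n d unfolding power root by (simp add: field_simps powr_minus_divide)
  also have "(2 * pi) powr (- real n) * (2 * pi) powr 1 = (2 * pi) powr (1 - real n)"
    using powr_add[of "2 * pi" "- real n" 1] by simp
  also have "d powr (- real n / 2) * d powr (1 / 2) = d powr (- (real n - 1) / 2)"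
    by (simp add: powr_add[symmetric] field_simps)
  finally show ?thesis by simp
qed

lemma mean_integral:
  fixes S :: sym2 and y1 y2 :: "nat \<Rightarrow> real"
  assumes S: "pos_def2 S" and n: "n > 0"
  shows "(\<integral>\<^sup>+m1. \<integral>\<^sup>+m2. ennreal (\<Prod>i<n. binorm_pdf (m1, m2) S (y1 i, y2 i)) \<partial>lborel \<partial>lborel)
       = ennreal ((2 * pi) powr (1 - real n) / real n * det2 S powr (- (real n - 1) / 2)
                  * exp (- tr2 (scatter n y1 y2) (inv2 S) / 2))"
proof -
  define B where "B = ((2 * pi) powr (-1) * det2 S powr (- 1 / 2)) ^ n * exp (- tr2 (scatter n y1 y2) (inv2 S) / 2)"
  define g where "g = (\<lambda>m1 m2. exp (- (real n / 2) * qf2 (inv2 S) (m1 - sample_mean n y1) (m2 - sample_mean n y2)))"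
  have dS: "det2 S > 0" using S by (simp add: pos_def2_alt)
  have B: "B \<ge> 0" by (simp add: B_def)
  have factor: "(\<Prod>i<n. binorm_pdf (m1, m2) S (y1 i, y2 i)) = B * g m1 m2" for m1 m2
    unfolding B_def g_def by (rule sample_likelihood_factor[OF n])
  have "(\<integral>\<^sup>+m1. \<integral>\<^sup>+m2. ennreal (\<Prod>i<n. binorm_pdf (m1, m2) S (y1 i, y2 i)) \<partial>lborel \<partial>lborel)
      = (\<integral>\<^sup>+m1. \<integral>\<^sup>+m2. ennreal B * ennreal (g m1 m2) \<partial>lborel \<partial>lborel)"
    by (simp add: factor ennreal_mult B g_def)
  also have "\<dots> = (\<integral>\<^sup>+m1. ennreal B * (\<integral>\<^sup>+m2. ennreal (g m1 m2) \<partial>lborel) \<partial>lborel)"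
    by (intro nn_integral_cong nn_integral_cmult) (simp add: g_def qf2_def)
  also have "\<dots> = ennreal B * (\<integral>\<^sup>+m1. \<integral>\<^sup>+m2. ennreal (g m1 m2) \<partial>lborel \<partial>lborel)"
    by (rule nn_integral_cmult) (simp add: g_def qf2_def)
  also have "(\<integral>\<^sup>+m1. \<integral>\<^sup>+m2. ennreal (g m1 m2) \<partial>lborel \<partial>lborel)
      = ennreal (pi / (real n / 2 * sqrt (1 / det2 S)))"
    unfolding g_def using n dS
    by (subst nn_integral_gaussian_2d) (simp_all add: pos_def2_inv2[OF S] det2_inv2)
  also have "ennreal B * \<dots> = ennreal (B * (pi / (real n / 2 * sqrt (1 / det2 S))))"
    by (rule ennreal_mult[symmetric]) (use B n dS in auto)
  also have "B * (pi / (real n / 2 * sqrt (1 / det2 S)))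
      = (2 * pi) powr (1 - real n) / real n * det2 S powr (- (real n - 1) / 2)
        * exp (- tr2 (scatter n y1 y2) (inv2 S) / 2)"
    unfolding B_def mean_integral_constant[OF dS n, symmetric] by (simp only: mult_ac)
  finally show ?thesis .
qed

section \<open>The inverse-Wishart prior\<close>

lemma iw_kernel_conjugate:
  "det2 S powr (- \<nu> / 2) * exp (- tr2 T (inv2 S) / 2) * iw_kernel \<nu>0 \<Psi> S
     = iw_kernel (\<nu>0 + \<nu>) (add2 \<Psi> T) S"
proof -
  have "- \<nu> / 2 + - (\<nu>0 + 3) / 2 = - (\<nu>0 + \<nu> + 3) / 2" by (simp add: field_simps)
  then have powers: "det2 S powr (- \<nu> / 2) * det2 S powr (- (\<nu>0 + 3) / 2) = det2 S powr (- (\<nu>0 + \<nu> + 3) / 2)"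
    by (metis powr_add)
  have traces: "exp (- tr2 \<Psi> (inv2 S) / 2) * exp (- tr2 T (inv2 S) / 2) = exp (- tr2 (add2 \<Psi> T) (inv2 S) / 2)"
    by (simp add: tr2_add2 exp_add[symmetric] field_simps)
  have "det2 S powr (- \<nu> / 2) * exp (- tr2 T (inv2 S) / 2) * iw_kernel \<nu>0 \<Psi> S
      = (det2 S powr (- \<nu> / 2) * det2 S powr (- (\<nu>0 + 3) / 2))
        * (exp (- tr2 \<Psi> (inv2 S) / 2) * exp (- tr2 T (inv2 S) / 2))"
    by (simp add: iw_kernel_def mult_ac)
  also have "\<dots> = iw_kernel (\<nu>0 + \<nu>) (add2 \<Psi> T) S"
    unfolding powers traces iw_kernel_def ..
  finally show ?thesis .
qed

lemma iw_kernel_nonneg: "iw_kernel \<nu> \<Psi> S \<ge> 0"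
  by (simp add: iw_kernel_def)

lemma K_nonneg: "K \<beta> \<nu> \<Psi> \<ge> 0"
  unfolding K_def by (intro integral_nonneg_AE) (simp add: iw_kernel_nonneg)

lemma borel_measurable_iw_kernel[measurable]: "iw_kernel \<nu> \<Psi> \<in> borel_measurable borel"
  unfolding iw_kernel_def[abs_def] tr2_alt inv2_alt by measurable

lemma R_beta_alt: "R_beta \<beta> = {S. fst S > 0 \<and> det2 S > 0 \<and> fst (snd S) / \<beta> \<ge> 0 \<and>
    fst S - fst (snd S) / \<beta> \<ge> 0 \<and> snd (snd S) - \<beta> * fst (snd S) \<ge> 0}"
  by (auto simp: R_beta_def pos_def2_alt)

lemma R_beta_sets[measurable]: "R_beta \<beta> \<in> sets borel"
  unfolding R_beta_alt by measurable

text \<open>The normalising integral \<open>K\<close> as a nonnegative integral (which may be infinite, in which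
  case \<open>K = 0\<close> by convention).\<close>

lemma K_nn_integral:
  "K \<beta> \<nu> \<Psi> = enn2real (\<integral>\<^sup>+S. ennreal (indicator (R_beta \<beta>) S * iw_kernel \<nu> \<Psi> S) \<partial>lborel)"
  unfolding K_def by (rule integral_eq_nn_integral) (simp_all add: iw_kernel_nonneg)

lemma Sigma_of_in_R_beta:
  assumes "\<beta> \<noteq> 0"
  shows "Sigma_of \<beta> t2 s1 s2 \<in> R_beta \<beta> \<longleftrightarrow> t2 \<ge> 0 \<and> s1 \<ge> 0 \<and> s2 \<ge> 0 \<and> pos_def2 (Sigma_of \<beta> t2 s1 s2)"
proof -
  have "\<beta> * t2 / \<beta> = t2" using assms by simp
  moreover have "\<beta>^2 * t2 + s2 - \<beta> * (\<beta> * t2) = s2" by (simp add: power2_eq_square)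
  ultimately show ?thesis by (auto simp: R_beta_def Sigma_of_def)
qed

lemma cond_prior_eq:
  assumes "\<beta> \<noteq> 0"
  shows "cond_prior c \<nu>0 \<kappa>0 \<rho>0 \<beta> t2 s1 s2
       = c * \<bar>\<beta>\<bar> / K \<beta> \<nu>0 (Psi0 \<nu>0 \<kappa>0 \<rho>0 \<beta>)
         * (indicator (R_beta \<beta>) (Sigma_of \<beta> t2 s1 s2) * iw_kernel \<nu>0 (Psi0 \<nu>0 \<kappa>0 \<rho>0 \<beta>) (Sigma_of \<beta> t2 s1 s2))"
  by (auto simp: cond_prior_def prior_Sigma_def Sigma_of_in_R_beta[OF assms] indicator_def)

section \<open>The reduced sampling density\<close>

lemma borel_measurable_binorm_pdf:
  "(\<lambda>w. binorm_pdf (fst w) (fst (snd w)) (snd (snd w))) \<in> borel_measurable borel"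
  unfolding binorm_pdf_def Let_def inv2_alt by measurable

lemma borel_measurable_binorm_pdf_comp[measurable (raw)]:
  assumes "f \<in> borel_measurable M" "g \<in> borel_measurable M" "h \<in> borel_measurable M"
  shows "(\<lambda>x. binorm_pdf (f x) (g x) (h x)) \<in> borel_measurable M"
  using measurable_comp[OF borel_measurable_Pair[OF assms(1) borel_measurable_Pair[OF assms(2,3)]]
      borel_measurable_binorm_pdf]
  by (simp add: comp_def)

lemma binorm_pdf_nonneg: "binorm_pdf m S x \<ge> 0"
  by (simp add: binorm_pdf_def Let_def)

definition post_kernel :: "nat \<Rightarrow> (nat \<Rightarrow> real) \<Rightarrow> (nat \<Rightarrow> real) \<Rightarrow> real \<Rightarrow> real \<Rightarrow> real \<Rightarrow> real \<Rightarrow> sym2 \<Rightarrow> real" where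
  "post_kernel n y1 y2 \<nu>0 \<kappa>0 \<rho>0 \<beta> S =
     indicator (R_beta \<beta>) S * iw_kernel (\<nu>0 + (real n - 1)) (add2 (Psi0 \<nu>0 \<kappa>0 \<rho>0 \<beta>) (scatter n y1 y2)) S"

text \<open>The substitution
  \<open>\<alpha> \<mapsto> \<alpha> - \<beta> \<mu>\<^sub>1\<close> turns the mean into a free pair \<open>(\<mu>\<^sub>1, \<mu>\<^sub>2)\<close>.\<close>

lemma mean_marginal:
  fixes n :: nat and y1 y2 :: "nat \<Rightarrow> real" and c \<nu>0 \<kappa>0 \<rho>0 \<beta> t2 s1 s2 :: real
  defines "Kd \<equiv> K \<beta> \<nu>0 (Psi0 \<nu>0 \<kappa>0 \<rho>0 \<beta>)"
    and "Cst \<equiv> (2 * pi) powr (1 - real n) / real n"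
  assumes n: "n > 0" and c: "c \<ge> 0" and \<beta>: "\<beta> \<noteq> 0"
  shows "(\<integral>\<^sup>+\<mu>1. \<integral>\<^sup>+\<alpha>. ennreal (sampling_density n y1 y2 \<mu>1 \<alpha> \<beta> t2 s1 s2 * cond_prior c \<nu>0 \<kappa>0 \<rho>0 \<beta> t2 s1 s2)
            \<partial>lborel \<partial>lborel)
       = ennreal (c * \<bar>\<beta>\<bar> / Kd * Cst * post_kernel n y1 y2 \<nu>0 \<kappa>0 \<rho>0 \<beta> (Sigma_of \<beta> t2 s1 s2))"
proof (cases "Sigma_of \<beta> t2 s1 s2 \<in> R_beta \<beta>")
  case False
  then show ?thesis
    by (simp add: cond_prior_eq[OF \<beta>] post_kernel_def)
next
  case True
  define S where "S = Sigma_of \<beta> t2 s1 s2"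
  define like where "like = (\<lambda>m1 m2. \<Prod>i<n. binorm_pdf (m1, m2) S (y1 i, y2 i))"
  define prior where "prior = c * \<bar>\<beta>\<bar> / Kd * iw_kernel \<nu>0 (Psi0 \<nu>0 \<kappa>0 \<rho>0 \<beta>) S"
  have S: "S \<in> R_beta \<beta>" "pos_def2 S" using True by (auto simp: S_def R_beta_def)
  have prior: "cond_prior c \<nu>0 \<kappa>0 \<rho>0 \<beta> t2 s1 s2 = prior" "prior \<ge> 0"
    using S c by (simp_all add: cond_prior_eq[OF \<beta>] prior_def S_def Kd_def K_nonneg iw_kernel_nonneg)
  have like_nonneg: "like m1 m2 \<ge> 0" for m1 m2
    unfolding like_def by (intro prod_nonneg) (simp add: binorm_pdf_nonneg)
  have like_m: "(\<lambda>m2. ennreal (like m1 m2)) \<in> borel_measurable borel" for m1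
    unfolding like_def by measurable
  have joint: "sampling_density n y1 y2 \<mu>1 \<alpha> \<beta> t2 s1 s2 * cond_prior c \<nu>0 \<kappa>0 \<rho>0 \<beta> t2 s1 s2
      = like \<mu>1 (\<beta> * \<mu>1 + \<alpha>) * prior" for \<mu>1 \<alpha>
    by (simp add: sampling_density_def like_def S_def prior add.commute)
  have "(\<integral>\<^sup>+\<mu>1. \<integral>\<^sup>+\<alpha>. ennreal (sampling_density n y1 y2 \<mu>1 \<alpha> \<beta> t2 s1 s2 * cond_prior c \<nu>0 \<kappa>0 \<rho>0 \<beta> t2 s1 s2)
            \<partial>lborel \<partial>lborel)
      = (\<integral>\<^sup>+\<mu>1. \<integral>\<^sup>+\<alpha>. ennreal (like \<mu>1 (\<beta> * \<mu>1 + \<alpha>)) * ennreal prior \<partial>lborel \<partial>lborel)"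
    by (simp add: joint ennreal_mult like_nonneg prior(2))
  also have "\<dots> = (\<integral>\<^sup>+\<mu>1. \<integral>\<^sup>+\<alpha>. ennreal (like \<mu>1 (\<beta> * \<mu>1 + \<alpha>)) \<partial>lborel \<partial>lborel) * ennreal prior"
    by (simp add: nn_integral_multc like_def)
  also have "(\<integral>\<^sup>+\<mu>1. \<integral>\<^sup>+\<alpha>. ennreal (like \<mu>1 (\<beta> * \<mu>1 + \<alpha>)) \<partial>lborel \<partial>lborel)
      = (\<integral>\<^sup>+\<mu>1. \<integral>\<^sup>+\<mu>2. ennreal (like \<mu>1 \<mu>2) \<partial>lborel \<partial>lborel)"
    by (intro nn_integral_cong nn_integral_lborel_translate[where f="\<lambda>m2. ennreal (like _ m2)"] like_m)
  also have "\<dots> = ennreal (Cst * det2 S powr (- (real n - 1) / 2) * exp (- tr2 (scatter n y1 y2) (inv2 S) / 2))"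
    unfolding like_def Cst_def by (rule mean_integral[OF S(2) n])
  also have "\<dots> * ennreal prior = ennreal (c * \<bar>\<beta>\<bar> / Kd * Cst * post_kernel n y1 y2 \<nu>0 \<kappa>0 \<rho>0 \<beta> S)"
  proof -
    have "Cst * det2 S powr (- (real n - 1) / 2) * exp (- tr2 (scatter n y1 y2) (inv2 S) / 2) * prior
        = c * \<bar>\<beta>\<bar> / Kd * Cst * (det2 S powr (- (real n - 1) / 2)
            * exp (- tr2 (scatter n y1 y2) (inv2 S) / 2) * iw_kernel \<nu>0 (Psi0 \<nu>0 \<kappa>0 \<rho>0 \<beta>) S)"
      by (simp add: prior_def)
    also have "\<dots> = c * \<bar>\<beta>\<bar> / Kd * Cst * post_kernel n y1 y2 \<nu>0 \<kappa>0 \<rho>0 \<beta> S"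
      unfolding iw_kernel_conjugate using S(1) by (simp add: post_kernel_def)
    finally show ?thesis
      using prior(2) by (simp add: ennreal_mult[symmetric] Cst_def)
  qed
  finally show ?thesis by (simp add: S_def)
qed

text \<open>Since every integral is evaluated as a nonnegative integral,
  the identity also holds in the degenerate cases where one of them diverges (both sides then
  follow the convention that a divergent integral is 0).\<close>

lemma reduced_density_eq:
  fixes n :: nat and y1 y2 :: "nat \<Rightarrow> real" and c \<nu>0 \<kappa>0 \<rho>0 \<beta> :: real
  assumes n: "n > 0" and c: "c \<ge> 0" and \<beta>: "\<beta> \<noteq> 0"
  shows "reduced_density n y1 y2 c \<nu>0 \<kappa>0 \<rho>0 \<beta>
       = c * ((2 * pi) powr (1 - real n) / real n) *
         (K \<beta> (\<nu>0 + (real n - 1)) (add2 (Psi0 \<nu>0 \<kappa>0 \<rho>0 \<beta>) (scatter n y1 y2))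
          / K \<beta> \<nu>0 (Psi0 \<nu>0 \<kappa>0 \<rho>0 \<beta>))"
proof -
  define Kd where "Kd = K \<beta> \<nu>0 (Psi0 \<nu>0 \<kappa>0 \<rho>0 \<beta>)"
  define Cst where "Cst = (2 * pi) powr (1 - real n) / real n"
  define k where "k = c * \<bar>\<beta>\<bar> / Kd * Cst"
  define F where "F = post_kernel n y1 y2 \<nu>0 \<kappa>0 \<rho>0 \<beta>"
  define h where "h = (\<lambda>p::real\<times>real\<times>real\<times>real\<times>real. case p of (\<mu>1, \<alpha>, t2, s1, s2) \<Rightarrow>
              sampling_density n y1 y2 \<mu>1 \<alpha> \<beta> t2 s1 s2 * cond_prior c \<nu>0 \<kappa>0 \<rho>0 \<beta> t2 s1 s2)"
  have k: "k \<ge> 0" using c by (simp add: k_def Kd_def Cst_def K_nonneg)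
  have F_nonneg: "F S \<ge> 0" for S by (simp add: F_def post_kernel_def iw_kernel_nonneg)
  have F_m[measurable]: "F \<in> borel_measurable borel" unfolding F_def post_kernel_def by measurable
  have h_m[measurable]: "h \<in> borel_measurable borel"
    unfolding h_def case_prod_beta sampling_density_def cond_prior_def prior_Sigma_def Sigma_of_def
    by measurable
  have h_nonneg: "h p \<ge> 0" for p
  proof -
    obtain \<mu>1 \<alpha> t2 s1 s2 where "p = (\<mu>1, \<alpha>, t2, s1, s2)" by (cases p) auto
    then show ?thesis
      using c by (simp add: h_def sampling_density_def cond_prior_eq[OF \<beta>] K_nonneg iw_kernel_nonneg
          binorm_pdf_nonneg prod_nonneg)
  qed
  have "(\<integral>\<^sup>+p. ennreal (h p) \<partial>lborel) = (\<integral>\<^sup>+r. \<integral>\<^sup>+x. \<integral>\<^sup>+y. ennreal (h (x, y, r)) \<partial>lborel \<partial>lborel \<partial>lborel)"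
    by (rule nn_integral_lborel_means_first) simp
  also have "\<dots> = (\<integral>\<^sup>+r. ennreal k * ennreal (F (Sigma_of \<beta> (fst r) (fst (snd r)) (snd (snd r)))) \<partial>lborel)"
    using mean_marginal[OF n c \<beta>] k F_nonneg
    by (simp add: h_def case_prod_beta k_def F_def Kd_def Cst_def ennreal_mult[symmetric])
  also have "\<dots> = ennreal k * (\<integral>\<^sup>+r. ennreal (F (Sigma_of \<beta> (fst r) (fst (snd r)) (snd (snd r)))) \<partial>lborel)"
    by (rule nn_integral_cmult) (simp add: Sigma_of_def)
  also have "(\<integral>\<^sup>+r. ennreal (F (Sigma_of \<beta> (fst r) (fst (snd r)) (snd (snd r)))) \<partial>lborel)
      = ennreal (1 / \<bar>\<beta>\<bar>) * (\<integral>\<^sup>+S. ennreal (F S) \<partial>lborel)"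
    by (rule nn_integral_Sigma_of[OF _ \<beta>]) measurable
  finally have "reduced_density n y1 y2 c \<nu>0 \<kappa>0 \<rho>0 \<beta> = k * (1 / \<bar>\<beta>\<bar>) * enn2real (\<integral>\<^sup>+S. ennreal (F S) \<partial>lborel)"
    using integral_eq_nn_integral[of h lborel] h_nonneg k
    by (simp add: reduced_density_def h_def[symmetric] enn2real_mult)
  then show ?thesis
    using \<beta> by (simp add: K_nn_integral[symmetric] F_def post_kernel_def k_def Kd_def Cst_def field_simps)
qed

text \<open>Bayes' rule is invariant under multiplying the likelihood by a positive constant (here
  the likelihood need only be proportional off the null set \<open>{0}\<close>).\<close>

lemma posterior_proportional_likelihood:
  fixes lik r :: "real \<Rightarrow> real" and C :: real
  assumes C: "C > 0" and lik: "\<And>b. b \<noteq> 0 \<Longrightarrow> lik b = C * r b" and \<beta>: "\<beta> \<noteq> 0"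
  shows "posterior pb lik \<beta> = pb \<beta> * r \<beta> / (\<integral>b. pb b * r b \<partial>lborel)"
proof -
  have "(\<integral>b. pb b * lik b \<partial>lborel) = (\<integral>b. C * (pb b * r b) \<partial>lborel)"
    by (rule integral_lborel_cong_off_zero) (simp add: lik)
  also have "\<dots> = C * (\<integral>b. pb b * r b \<partial>lborel)"
    by (rule integral_mult_right_zero)
  finally show ?thesis
    using C by (simp add: posterior_def lik[OF \<beta>] mult.left_commute[of "pb \<beta>"])
qed

theorem mainTheorem2:
  fixes n :: nat and y1 y2 :: "nat \<Rightarrow> real"
    and c \<nu>0 \<kappa>0 \<rho>0 :: real
  assumes n3: "n \<ge> 3"
    and Spd: "pos_def2 (sample_cov n y1 y2)"
    and c_pos: "c > 0"
    and nu0: "\<nu>0 > 1" and rho0: "-1 < \<rho>0" "\<rho>0 < 1" and kappa0: "\<kappa>0 > 0"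
  defines "\<nu> \<equiv> real n - 1"
  defines "ratio \<equiv> (\<lambda>\<beta>. K \<beta> (\<nu>0 + \<nu>) (add2 (Psi0 \<nu>0 \<kappa>0 \<rho>0 \<beta>) (scale2 \<nu> (sample_cov n y1 y2)))
                        / K \<beta> \<nu>0 (Psi0 \<nu>0 \<kappa>0 \<rho>0 \<beta>))"
  shows "(\<exists>C>0. \<forall>\<beta>. \<beta> \<noteq> 0 \<longrightarrow>
            reduced_density n y1 y2 c \<nu>0 \<kappa>0 \<rho>0 \<beta> = C * ratio \<beta>)
       \<and> (\<forall>pb. proper_density pb \<longrightarrow>
            (\<forall>\<beta>. \<beta> \<noteq> 0 \<longrightarrow>
               posterior pb (reduced_density n y1 y2 c \<nu>0 \<kappa>0 \<rho>0) \<beta>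
               = pb \<beta> * ratio \<beta> / (\<integral>b. pb b * ratio b \<partial>lborel)))"
proof -
  define C where "C = c * ((2 * pi) powr (1 - real n) / real n)"
  have C: "C > 0" using c_pos n3 by (simp add: C_def)
  have "scale2 \<nu> (sample_cov n y1 y2) = scatter n y1 y2"
    using n3 by (simp add: \<nu>_def scale2_sample_cov)
  then have lik: "reduced_density n y1 y2 c \<nu>0 \<kappa>0 \<rho>0 \<beta> = C * ratio \<beta>" if "\<beta> \<noteq> 0" for \<beta>
    using reduced_density_eq[of n c \<beta>] n3 c_pos that by (simp add: ratio_def \<nu>_def C_def)
  show ?thesis
    using C lik posterior_proportional_likelihood[of C "reduced_density n y1 y2 c \<nu>0 \<kappa>0 \<rho>0" ratio]
    by blast
qed

end
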